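(* Let $T$ be a decomposition tree of a distance-hereditary graph $G$, and let $v$ be an internal node of $T$ labeled $\oplus$ with left child $v_l$ and right child $v_r$, such that property (P) holds at $v_l$ and at $v_r$. Assume that $\hat\alpha(v_r)\le\hat\beta(v_l)$, and that neither ($\hat\alpha(v_l)=\hat\beta(v_r)=0$) nor ($\hat\alpha(v_r)=\hat\beta(v_l)=0$) holds. Then $\hat\beta(v)=\hat\beta(v_l)-\hat\alpha(v_r)$.
   Context: All graphs are finite, simple, undirected. For a graph $H$ and $S\subseteq V(H)$, $N_H[S]$ is $S$ together with all vertices adjacent to a vertex of $S$, and $H[S]$ is the induced subgraph. Graphs carry a "twin set": a single-vertex graph on $x$ has twin set $\{x\}$. For vertex-disjoint graphs $G_l,G_r$ with twin sets $TS(G_l),TS(G_r)$: the true twin operation $G_l\otimes G_r$ has vertex set $V(G_l)\cup V(G_r)$, edge set $E(G_l)\cup E(G_r)\cup\{uw: u\in TS(G_l), w\in TS(G_r)\}$ and twin set $TS(G_l)\cup TS(G_r)$; the false twin operation $G_l\odot G_r$ has vertex set $V(G_l)\cup V(G_r)$, edge set $E(G_l)\cup E(G_r)$, twin set $TS(G_l)\cup TS(G_r)$; the attachment operation $G_l\oplus G_r$ has the same vertex and edge sets as $G_l\otimes G_r$ and twin set $TS(G_l)$. A decomposition tree $T$ of $G$ is a rooted binary tree whose leaves are in bijection with $V(G)$, each internal node having a left and a right child and a label in $\{\otimes,\odot,\oplus\}$; for each node $v$ define $\hat G(v)$ and $\hat{TS}(v)$ recursively: for a leaf $x$, the single-vertex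 graph on $x$ with twin set $\{x\}$; for an internal node $v$ with label $\circ$ and children $v_l,v_r$, $\hat G(v)=\hat G(v_l)\circ\hat G(v_r)$ with the corresponding twin set; one requires $\hat G(\text{root})=G$. Then $\hat G(v)$ is the subgraph of $G$ induced by the set $\hat V(v)$ of leaves below $v$. For a node $u$ and $0\le k\le|\hat{TS}(u)|$, call $S\subseteq\hat V(u)$ $k$-feasible if $\hat V(u)\setminus\hat{TS}(u)\subseteq N_{\hat G(u)}[S]$ and there is $X\subseteq S\cap\hat{TS}(u)$ with $|X|=k$ such that $\hat G(u)[S\setminus X]$ has a perfect matching. $\hat\gamma_k(u)$ is the minimum size of a $k$-feasible set. $\hat{min}(u)=\min\{\hat\gamma_k(u):0\le k\le|\hat{TS}(u)|\}$, and $\hat\alpha(u)$, $\hat\beta(u)$ are the smallest and the largest $k$ with $\hat\gamma_k(u)=\hat{min}(u)$. Property (P) holds at $u$ if for every $0\le k\le|\hat{TS}(u)|$: $\hat\gamma_k(u)=\hat{min}(u)+\hat\alpha(u)-k$ when $k\le\hat\alpha(u)$; $\hat\gamma_k(u)=\hat{min}(u)+k-\hat\beta(u)$ when $k\ge\hat\beta(u)$; $\hat\gamma_k(u)=\hat{min}(u)$ when $\hat\alpha(u)<k<\hat\beta(u)$ and $k-\hat\alpha(u)$ is even; and $\hat\gamma_k(u)=\hat{min}(u)+1$ otherwise. *)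

theory Defs
  imports Main "HOL-Library.Extended_Nat"
begin

definition simple_graph :: "'a set \<Rightarrow> 'a set set \<Rightarrow> bool" where
  "simple_graph V E \<longleftrightarrow> finite V \<and>
     (\<forall>e\<in>E. \<exists>u v. e = {u, v} \<and> u \<noteq> v \<and> u \<in> V \<and> v \<in> V)"

fun walk :: "'a set set \<Rightarrow> 'a list \<Rightarrow> bool" where
  "walk E [] = False"
| "walk E [x] = True"
| "walk E (x # y # xs) = ({x, y} \<in> E \<and> walk E (y # xs))"

definition induced_edges :: "'a set set \<Rightarrow> 'a set \<Rightarrow> 'a set set" where
  "induced_edges E S = {e \<in> E. e \<subseteq> S}"

definition connected_graph :: "'a set \<Rightarrow> 'a set set \<Rightarrow> bool" where
  "connected_graph V E \<longleftrightarrow> (\<forall>u\<in>V. \<forall>v\<in>V. \<exists>p. walk E p \<and> set p \<subseteq> V \<and> hd p = u \<and> last p = v)"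

definition dist :: "'a set \<Rightarrow> 'a set set \<Rightarrow> 'a \<Rightarrow> 'a \<Rightarrow> nat" where
  "dist V E u v = (LEAST n. \<exists>p. walk E p \<and> set p \<subseteq> V \<and> hd p = u \<and> last p = v \<and> length p = Suc n)"

definition distance_hereditary :: "'a set \<Rightarrow> 'a set set \<Rightarrow> bool" where
  "distance_hereditary V E \<longleftrightarrow>
     (\<forall>S\<subseteq>V. connected_graph S (induced_edges E S) \<longrightarrow>
        (\<forall>u\<in>S. \<forall>v\<in>S. dist S (induced_edges E S) u v = dist V E u v))"

definition closed_nbhd :: "'a set \<Rightarrow> 'a set set \<Rightarrow> 'a set \<Rightarrow> 'a set" where
  "closed_nbhd V E S = S \<union> {w\<in>V. \<exists>s\<in>S. {s, w} \<in> E}"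

definition has_perfect_matching :: "'a set set \<Rightarrow> 'a set \<Rightarrow> bool" where
  "has_perfect_matching E S \<longleftrightarrow>
     (\<exists>M. M \<subseteq> E \<and> (\<forall>e\<in>M. e \<subseteq> S) \<and> (\<forall>x\<in>S. \<exists>!e. e \<in> M \<and> x \<in> e))"

datatype op = TrueTwin | FalseTwin | Attach

datatype 'a dtree = Leaf 'a | Node op "'a dtree" "'a dtree"

fun tverts :: "'a dtree \<Rightarrow> 'a set" where
  "tverts (Leaf x) = {x}"
| "tverts (Node _ l r) = tverts l \<union> tverts r"

fun TS :: "'a dtree \<Rightarrow> 'a set" where
  "TS (Leaf x) = {x}"
| "TS (Node TrueTwin l r) = TS l \<union> TS r"
| "TS (Node FalseTwin l r) = TS l \<union> TS r"
| "TS (Node Attach l r) = TS l"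

fun tedges :: "'a dtree \<Rightarrow> 'a set set" where
  "tedges (Leaf x) = {}"
| "tedges (Node FalseTwin l r) = tedges l \<union> tedges r"
| "tedges (Node _ l r) = tedges l \<union> tedges r \<union> {{u, w} | u w. u \<in> TS l \<and> w \<in> TS r}"

text \<open>Leaves are pairwise distinct (bijection between leaves and vertices).\<close>
fun distinct_leaves :: "'a dtree \<Rightarrow> bool" where
  "distinct_leaves (Leaf x) = True"
| "distinct_leaves (Node _ l r) =
     (distinct_leaves l \<and> distinct_leaves r \<and> tverts l \<inter> tverts r = {})"

fun subtrees :: "'a dtree \<Rightarrow> 'a dtree set" where
  "subtrees (Leaf x) = {Leaf x}"
| "subtrees (Node o' l r) = insert (Node o' l r) (subtrees l \<union> subtrees r)"

definition decomposition_tree :: "'a dtree \<Rightarrow> 'a set \<Rightarrow> 'a set set \<Rightarrow> bool" where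
  "decomposition_tree T V E \<longleftrightarrow> distinct_leaves T \<and> tverts T = V \<and> tedges T = E"

definition k_feasible :: "'a dtree \<Rightarrow> nat \<Rightarrow> 'a set \<Rightarrow> bool" where
  "k_feasible u k S \<longleftrightarrow> S \<subseteq> tverts u \<and>
     tverts u - TS u \<subseteq> closed_nbhd (tverts u) (tedges u) S \<and>
     (\<exists>X. X \<subseteq> S \<inter> TS u \<and> card X = k \<and>
          has_perfect_matching (induced_edges (tedges u) (S - X)) (S - X))"

text \<open>Minimum size of a k-feasible set (infinity if there is none).\<close>
definition gamma :: "'a dtree \<Rightarrow> nat \<Rightarrow> enat" where
  "gamma u k = (INF S \<in> {S. k_feasible u k S}. enat (card S))"

definition gmin :: "'a dtree \<Rightarrow> enat" where
  "gmin u = Min {gamma u k | k. k \<le> card (TS u)}"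

definition galpha :: "'a dtree \<Rightarrow> nat" where
  "galpha u = (LEAST k. k \<le> card (TS u) \<and> gamma u k = gmin u)"

definition gbeta :: "'a dtree \<Rightarrow> nat" where
  "gbeta u = (GREATEST k. k \<le> card (TS u) \<and> gamma u k = gmin u)"

definition property_P :: "'a dtree \<Rightarrow> bool" where
  "property_P u \<longleftrightarrow> (\<forall>k \<le> card (TS u).
     (k \<le> galpha u \<longrightarrow> gamma u k = gmin u + enat (galpha u - k)) \<and>
     (k \<ge> gbeta u \<longrightarrow> gamma u k = gmin u + enat (k - gbeta u)) \<and>
     (galpha u < k \<and> k < gbeta u \<and> even (k - galpha u) \<longrightarrow> gamma u k = gmin u) \<and>
     (galpha u < k \<and> k < gbeta u \<and> odd (k - galpha u) \<longrightarrow> gamma u k = gmin u + 1))"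

end

theory Submission
  imports Defs "HOL-Library.Disjoint_Sets"
begin

(*
  A k-feasible set S of v = vl (+) vr splits into S restricted to vl, which is (k + j)-feasible,
  and S restricted to vr, which is j-feasible, where j is the number of matching edges between
  TS(vl) and TS(vr): each such edge leaves one twin vertex unmatched on either side.
  Conversely, such sets recombine whenever k + j > 0, by matching j of the k + j unmatched twin
  vertices of vl with those of vr; the remaining ones dominate TS(vr).  Hence
  gamma_k(v) >= gamma_(k+j)(vl) + gamma_j(vr) for some j, and <= for every j with k + j > 0.
  So min(v) = min(vl) + min(vr), attained at k = beta(vl) - alpha(vr) with j = alpha(vr)
  (there k + j = beta(vl) > 0).  For any larger k, every j has k + j > beta(vl) or
  j < alpha(vr), so one of the two summands exceeds its minimum.
*)

lemma finite_tverts: "finite (tverts u)"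
  by (induction u) auto

lemma TS_subset_tverts: "TS u \<subseteq> tverts u"
  by (induction u rule: TS.induct) auto

lemma TS_nonempty: "TS u \<noteq> {}"
  by (induction u rule: TS.induct) auto

lemma finite_TS: "finite (TS u)"
  using finite_subset[OF TS_subset_tverts finite_tverts] .

lemma tedges_subset_tverts: "e \<in> tedges u \<Longrightarrow> e \<subseteq> tverts u"
proof (induction u arbitrary: e)
  case (Node op l r)
  then show ?case using TS_subset_tverts[of l] TS_subset_tverts[of r] by (cases op) auto
qed simp

lemma tedges_children_subset: "tedges l \<union> tedges r \<subseteq> tedges (Node op l r)"
  by (cases op) auto

lemma TS_Node_twin: "op \<noteq> Attach \<Longrightarrow> TS (Node op l r) = TS l \<union> TS r"
  by (cases op) auto

lemma distinct_leaves_subtree: "t \<in> subtrees T \<Longrightarrow> distinct_leaves T \<Longrightarrow> distinct_leaves t"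
  by (induction T) auto

lemma tedges_Node_cases:
  assumes "e \<in> tedges (Node op l r)"
  obtains "e \<in> tedges l" | "e \<in> tedges r" | u w where "e = {u, w}" "u \<in> TS l" "w \<in> TS r"
  using assms by (cases op) auto

lemma tedges_Node_left:
  assumes "distinct_leaves (Node op l r)" "{s, w} \<in> tedges (Node op l r)" "w \<in> tverts l - TS l"
  shows "{s, w} \<in> tedges l"
  using assms(2)
proof (cases rule: tedges_Node_cases)
  case 2
  then show ?thesis using assms(1,3) tedges_subset_tverts[of "{s, w}" r] by auto
next
  case (3 u x)
  then have "w = u \<or> w = x" by (auto simp: doubleton_eq_iff)
  then show ?thesis using 3 assms(1,3) TS_subset_tverts[of r] by auto
qed

lemma tedges_Node_right:
  assumes "distinct_leaves (Node op l r)" "{s, w} \<in> tedges (Node op l r)" "w \<in> tverts r - TS r"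
  shows "{s, w} \<in> tedges r"
  using assms(2)
proof (cases rule: tedges_Node_cases)
  case 1
  then show ?thesis using assms(1,3) tedges_subset_tverts[of "{s, w}" l] by auto
next
  case (3 u x)
  then have "w = u \<or> w = x" by (auto simp: doubleton_eq_iff)
  then show ?thesis using 3 assms(1,3) TS_subset_tverts[of l] by auto
qed

definition dominates_outside_TS :: "'a dtree \<Rightarrow> 'a set \<Rightarrow> bool" where
  "dominates_outside_TS u S \<longleftrightarrow> tverts u - TS u \<subseteq> closed_nbhd (tverts u) (tedges u) S"

lemma dominates_outside_TS_Node_left:
  assumes dl: "distinct_leaves (Node op l r)" and "dominates_outside_TS (Node op l r) S"
  shows "dominates_outside_TS l (S \<inter> tverts l)"
  unfolding dominates_outside_TS_def
proof
  fix w assume w: "w \<in> tverts l - TS l"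
  then have "w \<in> tverts (Node op l r) - TS (Node op l r)"
    using dl TS_subset_tverts[of r] by (cases op) auto
  then have "w \<in> S \<or> (\<exists>s\<in>S. {s, w} \<in> tedges (Node op l r))"
    using assms(2) unfolding dominates_outside_TS_def closed_nbhd_def by blast
  then have "w \<in> S \<or> (\<exists>s\<in>S. {s, w} \<in> tedges l)"
    using tedges_Node_left[OF dl _ w] by blast
  then show "w \<in> closed_nbhd (tverts l) (tedges l) (S \<inter> tverts l)"
    using w tedges_subset_tverts[of _ l] unfolding closed_nbhd_def by blast
qed

lemma dominates_outside_TS_Node_right:
  assumes dl: "distinct_leaves (Node op l r)" and "dominates_outside_TS (Node op l r) S"
  shows "dominates_outside_TS r (S \<inter> tverts r)"
  unfolding dominates_outside_TS_def
proof
  fix w assume w: "w \<in> tverts r - TS r"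
  then have "w \<in> tverts (Node op l r) - TS (Node op l r)"
    using dl TS_subset_tverts[of l] by (cases op) auto
  then have "w \<in> S \<or> (\<exists>s\<in>S. {s, w} \<in> tedges (Node op l r))"
    using assms(2) unfolding dominates_outside_TS_def closed_nbhd_def by blast
  then have "w \<in> S \<or> (\<exists>s\<in>S. {s, w} \<in> tedges r)"
    using tedges_Node_right[OF dl _ w] by blast
  then show "w \<in> closed_nbhd (tverts r) (tedges r) (S \<inter> tverts r)"
    using w tedges_subset_tverts[of _ r] unfolding closed_nbhd_def by blast
qed

lemma dominates_outside_TS_Node:
  assumes "dominates_outside_TS l Sl" "dominates_outside_TS r Sr"
    and "op = Attach \<Longrightarrow> Sl \<inter> TS l \<noteq> {}"
  shows "dominates_outside_TS (Node op l r) (Sl \<union> Sr)"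
  unfolding dominates_outside_TS_def
proof
  have mono: "closed_nbhd (tverts c) (tedges c) S \<subseteq> closed_nbhd (tverts (Node op l r)) (tedges (Node op l r)) (Sl \<union> Sr)"
    if "c = l \<and> S = Sl \<or> c = r \<and> S = Sr" for c S
    using that tedges_children_subset[of l r op] unfolding closed_nbhd_def by auto
  fix w assume w: "w \<in> tverts (Node op l r) - TS (Node op l r)"
  show "w \<in> closed_nbhd (tverts (Node op l r)) (tedges (Node op l r)) (Sl \<union> Sr)"
  proof (cases "w \<in> tverts r \<and> w \<in> TS r \<and> op = Attach")
    case True
    then obtain s where "s \<in> Sl" "s \<in> TS l" using assms(3) by blast
    then have "{s, w} \<in> tedges (Node op l r)" using True by auto
    then show ?thesis using w \<open>s \<in> Sl\<close> unfolding closed_nbhd_def by blast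
  next
    case False
    then have "w \<in> tverts l - TS l \<or> w \<in> tverts r - TS r" using w by (cases op) auto
    then show ?thesis using assms(1,2) mono unfolding dominates_outside_TS_def by blast
  qed
qed

lemma has_perfect_matching_induced_iff:
  "has_perfect_matching (induced_edges E A) A \<longleftrightarrow> (\<exists>M\<subseteq>E. disjoint M \<and> \<Union>M = A)"
proof -
  have matching_iff: "(\<forall>e\<in>M. e \<subseteq> A) \<and> (\<forall>x\<in>A. \<exists>!e. e \<in> M \<and> x \<in> e) \<longleftrightarrow> disjoint M \<and> \<Union>M = A"
    for M :: "'a set set"
    unfolding disjoint_def by (auto 0 3)
  have "has_perfect_matching (induced_edges E A) A \<longleftrightarrow>
      (\<exists>M. M \<subseteq> induced_edges E A \<and> disjoint M \<and> \<Union>M = A)"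
    unfolding has_perfect_matching_def matching_iff ..
  also have "\<dots> \<longleftrightarrow> (\<exists>M\<subseteq>E. disjoint M \<and> \<Union>M = A)"
    unfolding induced_edges_def by blast
  finally show ?thesis .
qed

lemma disjoint_pairs_bij_betw:
  assumes "bij_betw f Y Z" "Y \<inter> Z = {}"
  shows "disjoint ((\<lambda>y. {y, f y}) ` Y)"
proof (rule disjointI)
  have f: "f ` Y = Z" "inj_on f Y" using assms(1) by (auto simp: bij_betw_def)
  fix a b assume "a \<in> (\<lambda>y. {y, f y}) ` Y" "b \<in> (\<lambda>y. {y, f y}) ` Y" "a \<noteq> b"
  then obtain y y' where "y \<in> Y" "y' \<in> Y" "a = {y, f y}" "b = {y', f y'}" "y \<noteq> y'" by blast
  then show "a \<inter> b = {}" using f assms(2) by (auto dest: inj_onD)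
qed

lemma card_Union_Int_disjoint:
  assumes "disjoint C" and single: "\<And>e. e \<in> C \<Longrightarrow> \<exists>x. e \<inter> V = {x}"
  shows "card (\<Union>C \<inter> V) = card C"
proof -
  have "bij_betw (\<lambda>e. the_elem (e \<inter> V)) C (\<Union>C \<inter> V)"
  proof (rule bij_betwI')
    fix e e' assume "e \<in> C" "e' \<in> C"
    then show "(the_elem (e \<inter> V) = the_elem (e' \<inter> V)) = (e = e')"
      using single disjointD[OF assms(1)] by (metis Int_iff empty_iff insert_iff the_elem_eq)
  next
    fix e assume "e \<in> C"
    then show "the_elem (e \<inter> V) \<in> \<Union>C \<inter> V" using single by fastforce
  next
    fix x assume "x \<in> \<Union>C \<inter> V"
    then obtain e where e: "e \<in> C" "x \<in> e \<inter> V" by blast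
    obtain y where "e \<inter> V = {y}" using single[OF e(1)] by blast
    moreover have "x = y" using e(2) calculation by blast
    ultimately show "\<exists>e\<in>C. x = the_elem (e \<inter> V)" using e(1) by (intro bexI[of _ e]) simp_all
  qed
  then show ?thesis by (simp add: bij_betw_same_card)
qed

lemma Union_Int_Union_disjoint:
  assumes "disjoint M" "A \<subseteq> M" "B \<subseteq> M" "A \<inter> B = {}"
  shows "\<Union>A \<inter> \<Union>B = {}"
proof -
  have "disjoint (A \<union> B)" using assms(1) by (rule pairwise_subset) (use assms(2,3) in blast)
  then show ?thesis using Int_Union_pairwise_disjoint assms(4) by (metis Sup_empty)
qed

lemma cross_matching_sides:
  assumes dl: "distinct_leaves (Node op l r)"
    and M: "M \<subseteq> tedges (Node op l r) - tedges l - tedges r" "disjoint M"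
  shows "\<Union>M \<subseteq> TS l \<union> TS r" "card (\<Union>M \<inter> tverts l) = card (\<Union>M \<inter> tverts r)"
proof -
  have disj: "tverts l \<inter> tverts r = {}" using dl by simp
  have cross: "\<exists>u w. e = {u, w} \<and> u \<in> TS l \<and> w \<in> TS r" if "e \<in> M" for e
  proof -
    have "e \<in> tedges (Node op l r)" "e \<notin> tedges l" "e \<notin> tedges r" using M(1) that by auto
    then show ?thesis by (cases rule: tedges_Node_cases) auto
  qed
  then show "\<Union>M \<subseteq> TS l \<union> TS r" by blast
  have "e \<inter> tverts l = {u}" "e \<inter> tverts r = {w}"
    if "e = {u, w}" "u \<in> TS l" "w \<in> TS r" for e u w
    using that disj TS_subset_tverts[of l] TS_subset_tverts[of r] by auto
  then have "card (\<Union>M \<inter> tverts c) = card M" if "c = l \<or> c = r" for c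
    using that cross by (intro card_Union_Int_disjoint[OF M(2)]) metis
  then show "card (\<Union>M \<inter> tverts l) = card (\<Union>M \<inter> tverts r)" by simp
qed

lemma Union_Int_tedges_Node:
  assumes dl: "distinct_leaves (Node op l r)" and M: "M \<subseteq> tedges (Node op l r)" "disjoint M"
  defines "Mc \<equiv> M - tedges l - tedges r"
  shows "\<Union>(M \<inter> tedges l) = \<Union>M \<inter> tverts l - \<Union>Mc"
    and "\<Union>(M \<inter> tedges r) = \<Union>M \<inter> tverts r - \<Union>Mc"
proof -
  define Vl Vr Vc where "Vl = \<Union>(M \<inter> tedges l)" and "Vr = \<Union>(M \<inter> tedges r)" and "Vc = \<Union>Mc"
  have "\<Union>M = Vl \<union> Vr \<union> Vc" unfolding Vl_def Vr_def Vc_def Mc_def by blast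
  moreover have "Vl \<subseteq> tverts l" "Vr \<subseteq> tverts r"
    unfolding Vl_def Vr_def using tedges_subset_tverts by blast+
  moreover have "Vl \<inter> Vc = {}"
    unfolding Vl_def Vc_def Mc_def by (rule Union_Int_Union_disjoint[OF M(2)]) blast+
  moreover have "Vr \<inter> Vc = {}"
    unfolding Vr_def Vc_def Mc_def by (rule Union_Int_Union_disjoint[OF M(2)]) blast+
  moreover have "tverts l \<inter> tverts r = {}" using dl by simp
  ultimately show "Vl = \<Union>M \<inter> tverts l - Vc" "Vr = \<Union>M \<inter> tverts r - Vc" by blast+
qed

lemma k_feasibleI:
  assumes "S \<subseteq> tverts u" "dominates_outside_TS u S" "X \<subseteq> S \<inter> TS u" "card X = k"
    and "M \<subseteq> tedges u" "disjoint M" "\<Union>M = S - X"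
  shows "k_feasible u k S"
  using assms unfolding k_feasible_def dominates_outside_TS_def has_perfect_matching_induced_iff
  by blast

lemma k_feasibleE:
  assumes "k_feasible u k S"
  obtains X M where "S \<subseteq> tverts u" "dominates_outside_TS u S" "X \<subseteq> S \<inter> TS u" "card X = k"
    and "M \<subseteq> tedges u" "disjoint M" "\<Union>M = S - X"
  using assms unfolding k_feasible_def dominates_outside_TS_def has_perfect_matching_induced_iff
  by blast

lemma k_feasible_le_card: "k_feasible u k S \<Longrightarrow> k \<le> card (TS u)"
  unfolding k_feasible_def by (metis card_mono finite_TS le_inf_iff)

lemma gamma_le_card: "k_feasible u k S \<Longrightarrow> gamma u k \<le> enat (card S)"
  unfolding gamma_def by (rule INF_lower2[of S]) auto

lemma gamma_eq_infinity: "\<nexists>S. k_feasible u k S \<Longrightarrow> gamma u k = \<infinity>"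
  unfolding gamma_def by (simp add: top_enat_def[symmetric])

lemma gamma_attained:
  assumes "gamma u k \<noteq> \<infinity>"
  obtains S where "k_feasible u k S" "gamma u k = enat (card S)"
proof -
  let ?A = "(\<lambda>S. enat (card S)) ` {S. k_feasible u k S}"
  obtain S0 where "k_feasible u k S0" using assms gamma_eq_infinity by metis
  then have "?A \<noteq> {}" by blast
  then have "Inf ?A \<in> ?A" unfolding Inf_enat_def by (auto intro: LeastI)
  then obtain S where "k_feasible u k S" "Inf ?A = enat (card S)" by blast
  moreover have "gamma u k = Inf ?A" unfolding gamma_def by simp
  ultimately show ?thesis using that by simp
qed

lemma gamma_finite_le_card: "gamma u k \<noteq> \<infinity> \<Longrightarrow> k \<le> card (TS u)"
  using gamma_attained k_feasible_le_card by metis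

lemma k_feasible_Attach:
  assumes dl: "distinct_leaves (Node Attach l r)"
    and "k_feasible l (k + j) Sl" "k_feasible r j Sr" "k + j \<noteq> 0"
  shows "k_feasible (Node Attach l r) k (Sl \<union> Sr)"
proof -
  have disj: "tverts l \<inter> tverts r = {}" using dl by simp
  obtain Xl Ml where Sl: "Sl \<subseteq> tverts l" "dominates_outside_TS l Sl"
    and Xl: "Xl \<subseteq> Sl \<inter> TS l" "card Xl = k + j"
    and Ml: "Ml \<subseteq> tedges l" "disjoint Ml" "\<Union>Ml = Sl - Xl"
    using assms(2) by (rule k_feasibleE)
  obtain Xr Mr where Sr: "Sr \<subseteq> tverts r" "dominates_outside_TS r Sr"
    and Xr: "Xr \<subseteq> Sr \<inter> TS r" "card Xr = j"
    and Mr: "Mr \<subseteq> tedges r" "disjoint Mr" "\<Union>Mr = Sr - Xr"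
    using assms(3) by (rule k_feasibleE)
  have fin: "finite Xl" "finite Xr"
    using Xl(1) Xr(1) by (meson finite_TS finite_subset le_inf_iff)+
  obtain X where X: "X \<subseteq> Xl" "card X = k" using obtain_subset_with_card_n[of k Xl] Xl(2) by auto
  have "card (Xl - X) = card Xr" using X Xl(2) Xr(2) fin(1) by (simp add: card_Diff_subset finite_subset)
  then obtain f where f: "bij_betw f (Xl - X) Xr" using finite_same_card_bij fin by blast
  define Mc where "Mc = (\<lambda>y. {y, f y}) ` (Xl - X)"
  have Xl_Xr: "(Xl - X) \<inter> Xr = {}" using Xl(1) Xr(1) Sl(1) Sr(1) disj by blast
  have "{y, f y} \<in> tedges (Node Attach l r)" if "y \<in> Xl - X" for y
  proof -
    have "y \<in> TS l" "f y \<in> TS r" using that f Xl(1) Xr(1) bij_betwE by blast+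
    then show ?thesis by (simp only: tedges.simps) blast
  qed
  then have Mc: "Mc \<subseteq> tedges (Node Attach l r)" "disjoint Mc" "\<Union>Mc = (Xl - X) \<union> Xr"
    using f disjoint_pairs_bij_betw[OF f Xl_Xr] unfolding Mc_def bij_betw_def by auto
  have "disjoint (Ml \<union> Mr)"
    by (rule disjoint_union[OF Ml(2) Mr(2)]) (use Ml(3) Mr(3) Sl(1) Sr(1) disj in blast)
  then have matching: "disjoint (Ml \<union> Mr \<union> Mc)"
    by (rule disjoint_union[OF _ Mc(2)])
      (unfold Union_Un_distrib Ml(3) Mr(3) Mc(3), use Xl(1) Xr(1) Sl(1) Sr(1) disj in blast)
  have "Xl \<noteq> {}" using Xl(2) assms(4) by auto
  then have "Sl \<inter> TS l \<noteq> {}" using Xl(1) by blast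
  then have "dominates_outside_TS (Node Attach l r) (Sl \<union> Sr)"
    by (intro dominates_outside_TS_Node[OF Sl(2) Sr(2)])
  moreover have "\<Union>(Ml \<union> Mr \<union> Mc) = Sl \<union> Sr - X"
    unfolding Union_Un_distrib Ml(3) Mr(3) Mc(3) using X(1) Xl(1) Xr(1) Sl(1) Sr(1) disj by blast
  moreover have "Ml \<union> Mr \<union> Mc \<subseteq> tedges (Node Attach l r)" using Ml(1) Mr(1) Mc(1) by auto
  ultimately show ?thesis
    by (intro k_feasibleI[OF _ _ _ X(2) _ matching]) (use Sl(1) Sr(1) X(1) Xl(1) in auto)
qed

lemma k_feasible_twin:
  assumes dl: "distinct_leaves (Node op l r)" and "op \<noteq> Attach"
    and "k_feasible l kl Sl" "k_feasible r kr Sr"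
  shows "k_feasible (Node op l r) (kl + kr) (Sl \<union> Sr)"
proof -
  have disj: "tverts l \<inter> tverts r = {}" using dl by simp
  obtain Xl Ml where Sl: "Sl \<subseteq> tverts l" "dominates_outside_TS l Sl"
    and Xl: "Xl \<subseteq> Sl \<inter> TS l" "card Xl = kl"
    and Ml: "Ml \<subseteq> tedges l" "disjoint Ml" "\<Union>Ml = Sl - Xl"
    using assms(3) by (rule k_feasibleE)
  obtain Xr Mr where Sr: "Sr \<subseteq> tverts r" "dominates_outside_TS r Sr"
    and Xr: "Xr \<subseteq> Sr \<inter> TS r" "card Xr = kr"
    and Mr: "Mr \<subseteq> tedges r" "disjoint Mr" "\<Union>Mr = Sr - Xr"
    using assms(4) by (rule k_feasibleE)
  have "Xl \<inter> Xr = {}" using Xl(1) Xr(1) Sl(1) Sr(1) disj by blast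
  then have "card (Xl \<union> Xr) = kl + kr"
    using Xl Xr by (subst card_Un_disjoint) (auto intro: finite_subset[OF _ finite_TS])
  moreover have "disjoint (Ml \<union> Mr)"
    by (rule disjoint_union[OF Ml(2) Mr(2)]) (use Ml(3) Mr(3) Sl(1) Sr(1) disj in blast)
  moreover have "dominates_outside_TS (Node op l r) (Sl \<union> Sr)"
    using assms(2) by (intro dominates_outside_TS_Node[OF Sl(2) Sr(2)]) simp
  moreover have "\<Union>(Ml \<union> Mr) = Sl \<union> Sr - (Xl \<union> Xr)"
    unfolding Union_Un_distrib Ml(3) Mr(3) using Xl(1) Xr(1) Sl(1) Sr(1) disj by blast
  moreover have "Ml \<union> Mr \<subseteq> tedges (Node op l r)" using Ml(1) Mr(1) tedges_children_subset by blast
  ultimately show ?thesis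
    by (intro k_feasibleI) (use Sl(1) Sr(1) Xl(1) Xr(1) TS_Node_twin[where l=l and r=r, OF assms(2)] in auto)
qed

lemma ex_k_feasible: "distinct_leaves u \<Longrightarrow> k \<le> card (TS u) \<Longrightarrow> \<exists>S. k_feasible u k S"
proof (induction u arbitrary: k)
  case (Leaf x)
  obtain X where "X \<subseteq> TS (Leaf x)" "card X = k"
    using obtain_subset_with_card_n[OF Leaf.prems(2)] by blast
  then have "k_feasible (Leaf x) k X"
    by (intro k_feasibleI[of X _ X _ "{}"]) (auto simp: dominates_outside_TS_def)
  then show ?case by blast
next
  case (Node op l r)
  have dl: "distinct_leaves l" "distinct_leaves r" using Node.prems(1) by auto
  have TS_card: "1 \<le> card (TS c)" for c :: "'a dtree"
    using TS_nonempty[of c] finite_TS[of c] by (simp add: Suc_le_eq card_gt_0_iff)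
  show ?case
  proof (cases "op = Attach")
    case True
    obtain j where j: "k + j \<le> card (TS l)" "j \<le> card (TS r)" "k + j \<noteq> 0"
    proof (cases "k = 0")
      case True
      then show ?thesis using that[of 1] TS_card by simp
    next
      case False
      then show ?thesis using that[of 0] Node.prems(2) \<open>op = Attach\<close> by simp
    qed
    obtain Sl Sr where "k_feasible l (k + j) Sl" "k_feasible r j Sr"
      using Node.IH dl j by metis
    then show ?thesis
      using k_feasible_Attach Node.prems(1) j(3) \<open>op = Attach\<close> by blast
  next
    case False
    have "TS l \<inter> TS r = {}" using Node.prems(1) TS_subset_tverts[of l] TS_subset_tverts[of r] by auto
    then have "card (TS (Node op l r)) = card (TS l) + card (TS r)"
      unfolding TS_Node_twin[OF False] by (simp add: card_Un_disjoint finite_TS)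
    then obtain kl kr where "k = kl + kr" "kl \<le> card (TS l)" "kr \<le> card (TS r)"
      using Node.prems(2) by (intro that[of "min k (card (TS l))" "k - min k (card (TS l))"]) auto
    moreover obtain Sl Sr where "k_feasible l kl Sl" "k_feasible r kr Sr"
      using Node.IH dl calculation by metis
    ultimately show ?thesis using k_feasible_twin Node.prems(1) False by blast
  qed
qed

lemma k_feasible_Attach_split:
  assumes dl: "distinct_leaves (Node Attach l r)" and "k_feasible (Node Attach l r) k S"
  obtains j where "k_feasible l (k + j) (S \<inter> tverts l)" "k_feasible r j (S \<inter> tverts r)"
proof -
  let ?v = "Node Attach l r"
  obtain X M where S: "S \<subseteq> tverts ?v" "dominates_outside_TS ?v S"
    and X: "X \<subseteq> S \<inter> TS l" "card X = k"
    and M: "M \<subseteq> tedges ?v" "disjoint M" "\<Union>M = S - X"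
    using assms(2) by (auto elim: k_feasibleE)
  define Mc where "Mc = M - tedges l - tedges r"
  define Vc where "Vc = \<Union>Mc"
  define Ll where "Ll = Vc \<inter> tverts l"
  define Lr where "Lr = Vc \<inter> tverts r"
  have "Mc \<subseteq> tedges ?v - tedges l - tedges r" using M(1) unfolding Mc_def by blast
  moreover have "disjoint Mc" using M(2) unfolding Mc_def by (rule pairwise_subset) blast
  ultimately have cross: "Vc \<subseteq> TS l \<union> TS r" "card Ll = card Lr"
    using cross_matching_sides[OF dl] unfolding Vc_def Ll_def Lr_def by blast+
  have "X \<subseteq> tverts l" "tverts l \<inter> tverts r = {}" using X(1) TS_subset_tverts[of l] dl by auto
  then have parts: "\<Union>(M \<inter> tedges l) = S \<inter> tverts l - (X \<union> Ll)"
    "\<Union>(M \<inter> tedges r) = S \<inter> tverts r - Lr"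
    using Union_Int_tedges_Node[OF dl M(1,2)]
    unfolding M(3) Mc_def[symmetric] Vc_def[symmetric] Ll_def Lr_def by blast+
  have "Vc \<subseteq> S - X" using M(3) unfolding Vc_def Mc_def by blast
  then have "X \<inter> Ll = {}" and Ll_S: "Ll \<subseteq> S \<inter> TS l" and Lr_S: "Lr \<subseteq> S \<inter> TS r"
    using cross(1) dl TS_subset_tverts[of l] TS_subset_tverts[of r] unfolding Ll_def Lr_def by auto
  moreover have "finite X" "finite Ll"
    using X(1) finite_subset[OF _ finite_TS] finite_Int[OF disjI2, OF finite_tverts] unfolding Ll_def by auto
  ultimately have card_l: "card (X \<union> Ll) = k + card Lr"
    using X(2) cross(2) by (simp add: card_Un_disjoint)
  have "disjoint (M \<inter> tedges l)" "disjoint (M \<inter> tedges r)"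
    using M(2) by (rule pairwise_subset; blast)+
  then have "k_feasible l (k + card Lr) (S \<inter> tverts l)"
    and "k_feasible r (card Lr) (S \<inter> tverts r)"
    using X(1) Ll_S Lr_S TS_subset_tverts[of l] TS_subset_tverts[of r]
    by (intro k_feasibleI[OF _ dominates_outside_TS_Node_left[OF dl S(2)] _ card_l _ _ parts(1)]
        k_feasibleI[OF _ dominates_outside_TS_Node_right[OF dl S(2)] _ refl _ _ parts(2)]; auto)+
  then show ?thesis by (rule that)
qed

lemma gamma_Attach_le:
  assumes "distinct_leaves (Node Attach l r)" "k + j \<noteq> 0"
  shows "gamma (Node Attach l r) k \<le> gamma l (k + j) + gamma r j"
proof (cases "gamma l (k + j) = \<infinity> \<or> gamma r j = \<infinity>")
  case False
  then obtain Sl Sr where "k_feasible l (k + j) Sl" "gamma l (k + j) = enat (card Sl)"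
    and "k_feasible r j Sr" "gamma r j = enat (card Sr)"
    by (metis gamma_attained)
  then have "gamma (Node Attach l r) k \<le> enat (card (Sl \<union> Sr))"
    and "gamma l (k + j) + gamma r j = enat (card Sl + card Sr)"
    using gamma_le_card[OF k_feasible_Attach[OF assms(1) _ _ assms(2)]] by simp_all
  then show ?thesis using card_Un_le[of Sl Sr] by (metis enat_ord_simps(1) order_trans)
qed auto

lemma gamma_Attach_ge:
  assumes "distinct_leaves (Node Attach l r)"
  obtains j where "gamma l (k + j) + gamma r j \<le> gamma (Node Attach l r) k"
proof (cases "gamma (Node Attach l r) k = \<infinity>")
  case False
  then obtain S where S: "k_feasible (Node Attach l r) k S" "gamma (Node Attach l r) k = enat (card S)"
    by (rule gamma_attained)
  obtain j where "k_feasible l (k + j) (S \<inter> tverts l)" "k_feasible r j (S \<inter> tverts r)"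
    by (rule k_feasible_Attach_split[OF assms S(1)])
  then have "gamma l (k + j) + gamma r j \<le> enat (card (S \<inter> tverts l)) + enat (card (S \<inter> tverts r))"
    by (intro add_mono gamma_le_card)
  also have "\<dots> = enat (card (S \<inter> tverts l) + card (S \<inter> tverts r))" by simp
  also have "card (S \<inter> tverts l) + card (S \<inter> tverts r) = card S"
  proof -
    have "S \<inter> tverts l \<union> S \<inter> tverts r = S" using S(1) unfolding k_feasible_def by auto
    moreover have "(S \<inter> tverts l) \<inter> (S \<inter> tverts r) = {}" using assms by auto
    ultimately show ?thesis using card_Un_disjoint finite_tverts by (metis finite_Int)
  qed
  finally show ?thesis using that S(2) by metis
qed (use that in simp)

lemma gmin_Min_image: "gmin u = Min (gamma u ` {..card (TS u)})"
  unfolding gmin_def by (rule arg_cong[where f = Min]) auto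

lemma ex_gamma_eq_gmin: "\<exists>k\<le>card (TS u). gamma u k = gmin u"
proof -
  have "gmin u \<in> gamma u ` {..card (TS u)}"
    unfolding gmin_Min_image by (rule Min_in) auto
  then show ?thesis by auto
qed

lemma gmin_le_gamma: "gmin u \<le> gamma u k"
proof (cases "k \<le> card (TS u)")
  case True
  then show ?thesis unfolding gmin_Min_image by (intro Min_le) auto
next
  case False
  then have "gamma u k = \<infinity>" using gamma_finite_le_card by blast
  then show ?thesis by simp
qed

lemma gmin_finite: "distinct_leaves u \<Longrightarrow> gmin u \<noteq> \<infinity>"
  using ex_k_feasible[of u 0] gmin_le_gamma[of u 0] gamma_le_card
  by (metis enat_ord_simps(4) infinity_ileE order_trans zero_le)

lemma gmin_eqI: "(\<And>k. m \<le> gamma u k) \<Longrightarrow> gamma u k0 = m \<Longrightarrow> gmin u = m"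
  using ex_gamma_eq_gmin gmin_le_gamma by (metis antisym)

lemma gamma_galpha: "gamma u (galpha u) = gmin u"
  unfolding galpha_def using ex_gamma_eq_gmin by (metis (mono_tags, lifting) LeastI)

lemma gamma_gbeta: "gamma u (gbeta u) = gmin u"
  unfolding gbeta_def using ex_gamma_eq_gmin by (metis (mono_tags, lifting) GreatestI_nat)

lemma gmin_less_gamma_below_galpha:
  assumes "distinct_leaves u" "k < galpha u"
  shows "gmin u < gamma u k"
proof -
  have "gamma u k \<noteq> gmin u"
  proof
    assume eq: "gamma u k = gmin u"
    then have "k \<le> card (TS u)" using gmin_finite[OF assms(1)] gamma_finite_le_card by metis
    then have "galpha u \<le> k" unfolding galpha_def using eq by (intro Least_le) simp
    then show False using assms(2) by simp
  qed
  then show ?thesis using gmin_le_gamma order_le_neq_trans by metis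
qed

lemma gmin_less_gamma_above_gbeta:
  assumes "distinct_leaves u" "gbeta u < k"
  shows "gmin u < gamma u k"
proof -
  have "gamma u k \<noteq> gmin u"
  proof
    assume eq: "gamma u k = gmin u"
    then have "k \<le> card (TS u)" using gmin_finite[OF assms(1)] gamma_finite_le_card by metis
    then have "k \<le> gbeta u" unfolding gbeta_def using eq by (intro Greatest_le_nat) auto
    then show False using assms(2) by simp
  qed
  then show ?thesis using gmin_le_gamma order_le_neq_trans by metis
qed

lemma gbeta_eqI:
  assumes "gamma u k = gmin u" "gmin u \<noteq> \<infinity>" "\<And>k'. k < k' \<Longrightarrow> gamma u k' \<noteq> gmin u"
  shows "gbeta u = k"
  unfolding gbeta_def
proof (rule Greatest_equality)
  show "k \<le> card (TS u) \<and> gamma u k = gmin u" using assms(1,2) gamma_finite_le_card by metis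
qed (use assms(3) not_le in blast)

lemma enat_add_less_add: "a < x \<Longrightarrow> b \<le> y \<Longrightarrow> b \<noteq> \<infinity> \<Longrightarrow> a + b < x + (y :: enat)"
  by (cases a; cases b; cases x; cases y) auto

lemma gbeta_Attach:
  assumes dl: "distinct_leaves (Node Attach l r)" and "galpha r \<le> gbeta l" "gbeta l \<noteq> 0"
  shows "gbeta (Node Attach l r) = gbeta l - galpha r"
proof -
  let ?v = "Node Attach l r" and ?K = "gbeta l - galpha r" and ?m = "gmin l + gmin r"
  have dl_l: "distinct_leaves l" and dl_r: "distinct_leaves r" using dl by simp_all
  have lower: "?m \<le> gamma ?v k" for k
  proof -
    obtain j where "gamma l (k + j) + gamma r j \<le> gamma ?v k" by (rule gamma_Attach_ge[OF dl])
    then show ?thesis using add_mono[OF gmin_le_gamma gmin_le_gamma] order_trans by blast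
  qed
  have "gamma ?v ?K \<le> gamma l (gbeta l) + gamma r (galpha r)"
    using gamma_Attach_le[OF dl, of ?K "galpha r"] assms(2,3) by simp
  then have at_K: "gamma ?v ?K = ?m"
    using lower[of ?K] by (simp add: gamma_gbeta gamma_galpha)
  have above_K: "gamma ?v k \<noteq> ?m" if "?K < k" for k
  proof -
    obtain j where j: "gamma l (k + j) + gamma r j \<le> gamma ?v k" by (rule gamma_Attach_ge[OF dl])
    have "gbeta l < k + j \<or> j < galpha r" using that by linarith
    then have "?m < gamma l (k + j) + gamma r j"
    proof
      assume "gbeta l < k + j"
      then show ?thesis
        by (intro enat_add_less_add gmin_less_gamma_above_gbeta[OF dl_l] gmin_le_gamma gmin_finite[OF dl_r])
    next
      assume "j < galpha r"
      then have "gmin r + gmin l < gamma r j + gamma l (k + j)"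
        by (intro enat_add_less_add gmin_less_gamma_below_galpha[OF dl_r] gmin_le_gamma gmin_finite[OF dl_l])
      then show ?thesis by (metis add.commute)
    qed
    then show ?thesis using j by auto
  qed
  have "gmin ?v = ?m" using gmin_eqI lower at_K by metis
  moreover have "?m \<noteq> \<infinity>" using gmin_finite[OF dl_l] gmin_finite[OF dl_r] by auto
  ultimately show ?thesis using gbeta_eqI at_K above_K by metis
qed

theorem lemma32:
  fixes T :: "'a dtree" and V :: "'a set" and E :: "'a set set"
    and vl vr :: "'a dtree"
  assumes "simple_graph V E"
    and "distance_hereditary V E"
    and "decomposition_tree T V E"
    and "Node Attach vl vr \<in> subtrees T"
    and "property_P vl" and "property_P vr"
    and "galpha vr \<le> gbeta vl"
    and "\<not> (galpha vl = 0 \<and> gbeta vr = 0)"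
    and "\<not> (galpha vr = 0 \<and> gbeta vl = 0)"
  shows "gbeta (Node Attach vl vr) = gbeta vl - galpha vr"
proof -
  have "distinct_leaves (Node Attach vl vr)"
    using assms(3,4) distinct_leaves_subtree unfolding decomposition_tree_def by blast
  moreover have "gbeta vl \<noteq> 0" using assms(7,9) by auto
  ultimately show ?thesis using gbeta_Attach assms(7) by blast
qed

end
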